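(* Let $M$ be an $n\times d$ matrix (a database). For every nonempty subset of columns $J\subseteq[d]$, every family of thresholds $\{t_j\}_{j\in J}\subseteq(0,1]$, and every $c\in(0,1)$, \[ Q_J\Big(c\prod_{j\in J} t_j\Big)\;\le\;\sum_{j\in J} Q_j(t_j)\;+\;c . \]
   Context: $M$ has $n$ rows (users) and $d$ columns (features); $M_{ij}$ is the value of feature $j$ for user $i$. For a column $j$, $V_j=\{M_{ij}: i\in[n]\}$, and for $J\subseteq[d]$, $V_J=\prod_{j\in J}V_j$. The empirical joint distribution of the columns $J$ is $p_J(v)=\frac{1}{n}\,|\{i\in[n]: M_{ij}=v_j \text{ for all } j\in J\}|$ for $v\in V_J$. The exposure of columns $J$ at threshold $t$ is \[ Q_J(t)=\sum_{v\in V_J} p_J(v)\,\mathbf 1[p_J(v)<t]. \] For a single column $j$, $Q_j:=Q_{\{j\}}$. *)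

theory Defs
  imports "HOL-Analysis.Analysis"
begin

text \<open>A database is an n x d matrix M, given as a function on row indices
  {0..<n} and column indices {0..<d}; entry M i j is the value of feature j for user i.\<close>

definition col_vals :: "(nat \<Rightarrow> nat \<Rightarrow> 'a) \<Rightarrow> nat \<Rightarrow> nat \<Rightarrow> 'a set" where
  "col_vals M n j = {M i j | i. i < n}"

definition joint_vals :: "(nat \<Rightarrow> nat \<Rightarrow> 'a) \<Rightarrow> nat \<Rightarrow> nat set \<Rightarrow> (nat \<Rightarrow> 'a) set" where
  "joint_vals M n J = (\<Pi>\<^sub>E j\<in>J. col_vals M n j)"

definition emp_prob :: "(nat \<Rightarrow> nat \<Rightarrow> 'a) \<Rightarrow> nat \<Rightarrow> nat set \<Rightarrow> (nat \<Rightarrow> 'a) \<Rightarrow> real" where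
  "emp_prob M n J v = real (card {i. i < n \<and> (\<forall>j\<in>J. M i j = v j)}) / real n"

definition exposure :: "(nat \<Rightarrow> nat \<Rightarrow> 'a) \<Rightarrow> nat \<Rightarrow> nat set \<Rightarrow> real \<Rightarrow> real" where
  "exposure M n J t =
     (\<Sum>v\<in>joint_vals M n J. emp_prob M n J v * (if emp_prob M n J v < t then 1 else 0))"

end

theory Submission
  imports Defs
begin

text \<open>Weighting each value by its frequency turns an exposure into the fraction of
  users whose own value is rare. A user whose restriction to \<open>J\<close> is rare at threshold
  \<open>c \<Prod> t\<^sub>j\<close> but who is not rare in any single column \<open>j\<close> at threshold \<open>t\<^sub>j\<close> takes, in
  column \<open>j\<close>, one of at most \<open>1/t\<^sub>j\<close> frequent values. Such users therefore realise at most
  \<open>1 / \<Prod> t\<^sub>j\<close> restrictions to \<open>J\<close>, each shared by fewer than \<open>c (\<Prod> t\<^sub>j) n\<close> users: fewer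
  than \<open>c n\<close> users in total. All other rare users are counted by some \<open>Q\<^sub>j(t\<^sub>j)\<close>.\<close>

lemma card_filter_eq_sum_fibres:
  fixes n :: nat
  assumes "finite V" and "\<And>i. i < n \<Longrightarrow> f i \<in> V"
  shows "card {i. i < n \<and> P (f i)} = (\<Sum>v\<in>V. if P v then card {i. i < n \<and> f i = v} else 0)"
proof -
  have "{i. i < n \<and> P (f i)} = (\<Union>v\<in>{v\<in>V. P v}. {i. i < n \<and> f i = v})"
    using assms(2) by auto
  also have "card \<dots> = (\<Sum>v\<in>{v\<in>V. P v}. card {i. i < n \<and> f i = v})"
    using assms(1) by (intro card_UN_disjoint) auto
  also have "\<dots> = (\<Sum>v\<in>V. if P v then card {i. i < n \<and> f i = v} else 0)"
    using assms(1) by (rule sum.inter_filter)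
  finally show ?thesis .
qed

lemma sum_card_fibres_le:
  assumes "finite A"
  shows "(\<Sum>x\<in>A. card {k. k < n \<and> f k = x}) \<le> n"
proof -
  have "(\<Sum>x\<in>A. card {k. k < n \<and> f k = x}) = card (\<Union>x\<in>A. {k. k < n \<and> f k = x})"
    using assms by (intro card_UN_disjoint[symmetric]) auto
  also have "\<dots> \<le> card {..<n}"
    by (rule card_mono) auto
  finally show ?thesis
    by simp
qed

lemma card_image_mult_le_if_fibres_large:
  assumes "finite G" and "\<And>x. x \<in> G \<Longrightarrow> m \<le> real (card {k. k < n \<and> f k = f x})"
  shows "real (card (f ` G)) * m \<le> real n"
proof -
  have "real (card (f ` G)) * m = (\<Sum>y\<in>f ` G. m)"
    by simp
  also have "\<dots> \<le> (\<Sum>y\<in>f ` G. real (card {k. k < n \<and> f k = y}))"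
    using assms(2) by (intro sum_mono) auto
  also have "\<dots> \<le> real n"
    using sum_card_fibres_le[of "f ` G" n f] assms(1) by (simp flip: of_nat_sum)
  finally show ?thesis .
qed

lemma card_le_card_image_mult_if_fibres_small:
  assumes "finite G" and "\<And>x. x \<in> G \<Longrightarrow> real (card {y\<in>G. f y = f x}) \<le> m"
  shows "real (card G) \<le> real (card (f ` G)) * m"
proof -
  have "card G \<le> (\<Sum>y\<in>f ` G. card {x\<in>G. f x = y})"
  proof -
    have "card G = card (\<Union>y\<in>f ` G. {x\<in>G. f x = y})"
      by (rule arg_cong[where f = card]) auto
    also have "\<dots> \<le> (\<Sum>y\<in>f ` G. card {x\<in>G. f x = y})"
      using assms(1) by (intro card_UN_le) simp
    finally show ?thesis .
  qed
  hence "real (card G) \<le> (\<Sum>y\<in>f ` G. real (card {x\<in>G. f x = y}))"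
    by (simp flip: of_nat_sum)
  also have "\<dots> \<le> (\<Sum>y\<in>f ` G. m)"
    using assms(2) by (intro sum_mono) auto
  finally show ?thesis
    by simp
qed

lemma col_vals_finite: "finite (col_vals M n j)"
proof -
  have "col_vals M n j = (\<lambda>i. M i j) ` {..<n}"
    unfolding col_vals_def by auto
  thus ?thesis
    by simp
qed

lemma emp_prob_eq_card_restrict:
  assumes "v \<in> joint_vals M n J"
  shows "emp_prob M n J v = real (card {i. i < n \<and> restrict (M i) J = v}) / real n"
proof -
  have "(\<forall>j\<in>J. M i j = v j) \<longleftrightarrow> restrict (M i) J = v" for i
    using assms unfolding joint_vals_def by (auto simp: PiE_iff extensional_def fun_eq_iff)
  thus ?thesis
    unfolding emp_prob_def by simp
qed

definition row_multiplicity :: "(nat \<Rightarrow> nat \<Rightarrow> 'a) \<Rightarrow> nat \<Rightarrow> nat set \<Rightarrow> nat \<Rightarrow> nat" where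
  "row_multiplicity M n J i = card {k. k < n \<and> (\<forall>j\<in>J. M k j = M i j)}"

definition rare_rows :: "(nat \<Rightarrow> nat \<Rightarrow> 'a) \<Rightarrow> nat \<Rightarrow> nat set \<Rightarrow> real \<Rightarrow> nat set" where
  "rare_rows M n J T = {i. i < n \<and> real (row_multiplicity M n J i) < T * n}"

lemma emp_prob_row:
  "emp_prob M n J (restrict (M i) J) = real (row_multiplicity M n J i) / real n"
  unfolding emp_prob_def row_multiplicity_def by simp

lemma exposure_eq_card_rare_rows:
  assumes "finite J"
  shows "exposure M n J T = real (card (rare_rows M n J T)) / real n"
proof (cases "n = 0")
  case False
  let ?V = "joint_vals M n J" and ?p = "emp_prob M n J"
  have "finite ?V"
    unfolding joint_vals_def using assms by (simp add: finite_PiE col_vals_finite)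
  moreover have "restrict (M i) J \<in> ?V" if "i < n" for i
    using that unfolding joint_vals_def col_vals_def by auto
  ultimately have "card {i. i < n \<and> ?p (restrict (M i) J) < T}
      = (\<Sum>v\<in>?V. if ?p v < T then card {i. i < n \<and> restrict (M i) J = v} else 0)"
    by (rule card_filter_eq_sum_fibres)
  hence "real (card {i. i < n \<and> ?p (restrict (M i) J) < T}) / n
      = (\<Sum>v\<in>?V. real (if ?p v < T then card {i. i < n \<and> restrict (M i) J = v} else 0) / n)"
    by (simp only: of_nat_sum sum_divide_distrib)
  also have "\<dots> = exposure M n J T"
    unfolding exposure_def by (intro sum.cong refl) (simp add: emp_prob_eq_card_restrict)
  finally show ?thesis
    using False by (simp add: rare_rows_def emp_prob_row divide_less_eq)
qed (simp add: exposure_def emp_prob_def)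

lemma card_restrict_image_mult_prod_le:
  fixes t :: "nat \<Rightarrow> real"
  assumes "finite J" and "\<And>j. j \<in> J \<Longrightarrow> 0 < t j" and "G \<subseteq> {..<n}"
    and "\<And>i j. i \<in> G \<Longrightarrow> j \<in> J \<Longrightarrow> t j * n \<le> real (row_multiplicity M n {j} i)"
  shows "real (card ((\<lambda>i. restrict (M i) J) ` G)) * (\<Prod>j\<in>J. t j) \<le> 1"
proof -
  let ?A = "\<lambda>j. (\<lambda>i. M i j) ` G"
  have "finite G"
    using assms(3) finite_subset by blast
  have "(\<lambda>i. restrict (M i) J) ` G \<subseteq> Pi\<^sub>E J ?A"
    by auto
  hence "card ((\<lambda>i. restrict (M i) J) ` G) \<le> (\<Prod>j\<in>J. card (?A j))"
    using assms(1) \<open>finite G\<close> card_mono[of "Pi\<^sub>E J ?A"] by (simp add: card_PiE finite_PiE)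
  hence "real (card ((\<lambda>i. restrict (M i) J) ` G)) * (\<Prod>j\<in>J. t j) \<le> (\<Prod>j\<in>J. real (card (?A j)) * t j)"
    using assms(2) by (simp add: prod.distrib less_imp_le prod_nonneg mult_right_mono flip: of_nat_prod)
  also have "\<dots> \<le> 1"
  proof (intro prod_le_1 conjI)
    fix j assume "j \<in> J"
    show "0 \<le> real (card (?A j)) * t j"
      using assms(2) \<open>j \<in> J\<close> by (simp add: less_imp_le)
    show "real (card (?A j)) * t j \<le> 1"
    proof (cases "n = 0")
      case False
      have "real (card (?A j)) * (t j * n) \<le> real n"
        using \<open>finite G\<close> \<open>j \<in> J\<close> assms(4)
        by (intro card_image_mult_le_if_fibres_large) (auto simp: row_multiplicity_def)
      thus ?thesis
        using False by (simp add: mult.assoc[symmetric])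
    qed (use assms(3) in simp)
  qed
  finally show ?thesis .
qed

lemma card_rare_rows_of_frequent_coordinates:
  fixes t :: "nat \<Rightarrow> real" and T :: real
  assumes "finite J" and "\<And>j. j \<in> J \<Longrightarrow> 0 < t j" and "0 \<le> T"
  shows "real (card (rare_rows M n J T - (\<Union>j\<in>J. rare_rows M n {j} (t j)))) * (\<Prod>j\<in>J. t j) \<le> T * n"
proof -
  define G where "G = rare_rows M n J T - (\<Union>j\<in>J. rare_rows M n {j} (t j))"
  let ?R = "\<lambda>i. restrict (M i) J"
  have "G \<subseteq> {..<n}" and "finite G"
    unfolding G_def rare_rows_def by auto
  have "real (card {y\<in>G. ?R y = ?R x}) \<le> T * n" if "x \<in> G" for x
  proof -
    have "{y\<in>G. ?R y = ?R x} \<subseteq> {k. k < n \<and> (\<forall>j\<in>J. M k j = M x j)}"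
      unfolding G_def rare_rows_def by (auto simp: fun_eq_iff restrict_def)
    hence "card {y\<in>G. ?R y = ?R x} \<le> row_multiplicity M n J x"
      unfolding row_multiplicity_def by (intro card_mono) auto
    thus ?thesis
      using that unfolding G_def rare_rows_def by simp
  qed
  hence "real (card G) \<le> real (card (?R ` G)) * (T * n)"
    using \<open>finite G\<close> card_le_card_image_mult_if_fibres_small[of G ?R] by blast
  hence "real (card G) * (\<Prod>j\<in>J. t j) \<le> real (card (?R ` G)) * (T * n) * (\<Prod>j\<in>J. t j)"
    using assms(2) by (intro mult_right_mono prod_nonneg) (auto simp: less_imp_le)
  also have "\<dots> = T * n * (real (card (?R ` G)) * (\<Prod>j\<in>J. t j))"
    by (simp add: ac_simps)
  also have "\<dots> \<le> T * n"
  proof (rule mult_left_le)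
    have "t j * n \<le> real (row_multiplicity M n {j} i)" if "i \<in> G" and "j \<in> J" for i j
      using that unfolding G_def rare_rows_def by (auto simp: not_less)
    with assms(1,2) \<open>G \<subseteq> {..<n}\<close> show "real (card (?R ` G)) * (\<Prod>j\<in>J. t j) \<le> 1"
      by (rule card_restrict_image_mult_prod_le)
  qed (use assms(3) in simp)
  finally show ?thesis
    unfolding G_def .
qed

lemma card_rare_rows_le:
  fixes t :: "nat \<Rightarrow> real" and c :: real
  assumes "finite J" and "\<And>j. j \<in> J \<Longrightarrow> 0 < t j" and "0 \<le> c"
  shows "real (card (rare_rows M n J (c * (\<Prod>j\<in>J. t j))))
    \<le> (\<Sum>j\<in>J. real (card (rare_rows M n {j} (t j)))) + c * n"
proof -
  let ?B = "rare_rows M n J (c * (\<Prod>j\<in>J. t j))" and ?Bj = "\<lambda>j. rare_rows M n {j} (t j)"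
  have fin: "finite (rare_rows M n J' T')" for J' T'
    unfolding rare_rows_def by simp
  have "card ?B \<le> card ((\<Union>j\<in>J. ?Bj j) \<union> (?B - (\<Union>j\<in>J. ?Bj j)))"
    using assms(1) fin by (intro card_mono) auto
  also have "\<dots> \<le> (\<Sum>j\<in>J. card (?Bj j)) + card (?B - (\<Union>j\<in>J. ?Bj j))"
    by (rule order_trans[OF card_Un_le add_right_mono[OF card_UN_le[OF assms(1)]]])
  finally have "real (card ?B) \<le> (\<Sum>j\<in>J. real (card (?Bj j))) + real (card (?B - (\<Union>j\<in>J. ?Bj j)))"
    by (simp flip: of_nat_sum of_nat_add)
  moreover have "real (card (?B - (\<Union>j\<in>J. ?Bj j))) \<le> c * n"
  proof -
    have "0 < (\<Prod>j\<in>J. t j)"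
      using assms(2) by (simp add: prod_pos)
    moreover have "real (card (?B - (\<Union>j\<in>J. ?Bj j))) * (\<Prod>j\<in>J. t j) \<le> c * n * (\<Prod>j\<in>J. t j)"
      using card_rare_rows_of_frequent_coordinates[OF assms(1,2), where T = "c * (\<Prod>j\<in>J. t j)"]
        assms(2,3) by (simp add: ac_simps prod_nonneg less_imp_le)
    ultimately show ?thesis
      by simp
  qed
  ultimately show ?thesis
    by linarith
qed

theorem theorem2:
  fixes M :: "nat \<Rightarrow> nat \<Rightarrow> 'a" and n d :: nat
    and J :: "nat set" and t :: "nat \<Rightarrow> real" and c :: real
  assumes "J \<subseteq> {0..<d}" and "J \<noteq> {}"
    and "\<forall>j\<in>J. 0 < t j \<and> t j \<le> 1"
    and "0 < c" and "c < 1"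
  shows "exposure M n J (c * (\<Prod>j\<in>J. t j)) \<le> (\<Sum>j\<in>J. exposure M n {j} (t j)) + c"
proof (cases "n = 0")
  case True
  with assms(4) show ?thesis
    by (simp add: exposure_def emp_prob_def)
next
  case False
  have "finite J"
    using assms(1) finite_subset by blast
  have "real (card (rare_rows M n J (c * (\<Prod>j\<in>J. t j))))
      \<le> (\<Sum>j\<in>J. real (card (rare_rows M n {j} (t j)))) + c * n"
    using \<open>finite J\<close> assms(3,4) by (intro card_rare_rows_le) auto
  hence "real (card (rare_rows M n J (c * (\<Prod>j\<in>J. t j)))) / n
      \<le> (\<Sum>j\<in>J. real (card (rare_rows M n {j} (t j))) / n) + c"
    using False by (simp add: divide_le_eq sum_divide_distrib[symmetric] algebra_simps)
  thus ?thesis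
    using \<open>finite J\<close> by (simp add: exposure_eq_card_rare_rows)
qed

end
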